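(* Let $\mathcal H_X,\mathcal H_Y$ be finite-dimensional Hilbert spaces with $\dim\mathcal H_X\ge2$, let $\rho$ be a state on $\mathcal H_X\otimes\mathcal H_Y$, and let $\ket{\alpha_0},\ket{\alpha_1}\in\mathcal H_X$ be orthonormal. Define the operators on $\mathcal H_Y$ $$A=\bra{\alpha_0}\rho\ket{\alpha_0},\qquad B=\bra{\alpha_0}\rho\ket{\alpha_1},\qquad D=\bra{\alpha_1}\rho\ket{\alpha_1}$$ (partial matrix elements on the $X$ factor). Assume that $A\neq0$, $\operatorname{Ker}A\neq\{0\}$, and $P_{\operatorname{supp}A}\,B\,P_{\operatorname{Ker}A}\neq0$, where $P_{\operatorname{supp}A}$ and $P_{\operatorname{Ker}A}$ are the orthogonal projectors onto the support (range) and the kernel of $A$. Then $\rho$ is NPT across the cut $X|Y$ (its partial transpose with respect to $Y$ is not positive semidefinite), and the projective assemblage generated by projective measurements on $X$ admits no local hidden state model; hence $\rho$ is projectively steerable from $X$ to $Y$.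
   Context: For a bipartite state $\rho$ on $\mathcal H_X\otimes\mathcal H_Y$, the projective assemblage from $X$ to $Y$ consists of the unnormalized conditional states $\sigma_{a|M}=\operatorname{tr}_X[(\Pi_a\otimes I_Y)\rho]$ for all projective measurements $M=\{\Pi_a\}$ on $\mathcal H_X$. It admits a local hidden state (LHS) model if there exist a probability space $(\Lambda,\mu)$, density matrices $\tau_\lambda$ on $\mathcal H_Y$ (measurable in $\lambda$) and response functions $p(a|M,\lambda)\ge0$ with $\sum_a p(a|M,\lambda)=1$ such that $\sigma_{a|M}=\int_\Lambda p(a|M,\lambda)\tau_\lambda\,d\mu(\lambda)$ for all $M$ and $a$. The state is projectively steerable from $X$ to $Y$ if no such model exists. NPT means the partial transpose (with respect to any fixed basis of $\mathcal H_Y$) is not positive semidefinite. *)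

theory Defs
  imports "HOL-Probability.Probability"
begin

text \<open>Finite-dimensional Hilbert spaces are modelled as complex functions on a finite
  index type (standard inner product); operators are matrices indexed by that type.
  The bipartite space H_X (x) H_Y is indexed by the product type.\<close>

type_synonym 'a cmat = "'a \<Rightarrow> 'a \<Rightarrow> complex"

definition cinner :: "('a::finite \<Rightarrow> complex) \<Rightarrow> ('a \<Rightarrow> complex) \<Rightarrow> complex" where
  "cinner u v = (\<Sum>i\<in>UNIV. cnj (u i) * v i)"

definition mat_vec :: "'a::finite cmat \<Rightarrow> ('a \<Rightarrow> complex) \<Rightarrow> ('a \<Rightarrow> complex)" where
  "mat_vec M v = (\<lambda>i. \<Sum>j\<in>UNIV. M i j * v j)"

definition mat_mult :: "'a::finite cmat \<Rightarrow> 'a cmat \<Rightarrow> 'a cmat" where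
  "mat_mult M N = (\<lambda>i k. \<Sum>j\<in>UNIV. M i j * N j k)"

definition adjoint :: "'a cmat \<Rightarrow> 'a cmat" where
  "adjoint M = (\<lambda>i j. cnj (M j i))"

definition id_mat :: "'a cmat" where
  "id_mat = (\<lambda>i j. if i = j then 1 else 0)"

definition zero_mat :: "'a cmat" where
  "zero_mat = (\<lambda>i j. 0)"

definition mat_trace :: "'a::finite cmat \<Rightarrow> complex" where
  "mat_trace M = (\<Sum>i\<in>UNIV. M i i)"

definition psd :: "'a::finite cmat \<Rightarrow> bool" where
  "psd M \<longleftrightarrow> (\<forall>v. cinner v (mat_vec M v) \<in> \<real> \<and> Re (cinner v (mat_vec M v)) \<ge> 0)"

definition density_matrix :: "'a::finite cmat \<Rightarrow> bool" where
  "density_matrix M \<longleftrightarrow> psd M \<and> mat_trace M = 1"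

definition mat_kernel :: "'a::finite cmat \<Rightarrow> ('a \<Rightarrow> complex) set" where
  "mat_kernel A = {v. mat_vec A v = (\<lambda>_. 0)}"

definition mat_range :: "'a::finite cmat \<Rightarrow> ('a \<Rightarrow> complex) set" where
  "mat_range A = range (mat_vec A)"

definition is_orth_projector :: "'a::finite cmat \<Rightarrow> ('a \<Rightarrow> complex) set \<Rightarrow> bool" where
  "is_orth_projector P S \<longleftrightarrow> adjoint P = P \<and> mat_mult P P = P \<and> range (mat_vec P) = S"

definition orth_proj :: "('a::finite \<Rightarrow> complex) set \<Rightarrow> 'a cmat" where
  "orth_proj S = (THE P. is_orth_projector P S)"

text \<open>Partial matrix element on the X factor: <u| rho |w>, an operator on H_Y.\<close>
definition partial_elem ::
  "('x::finite \<times> 'y::finite) cmat \<Rightarrow> ('x \<Rightarrow> complex) \<Rightarrow> ('x \<Rightarrow> complex) \<Rightarrow> 'y cmat" where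
  "partial_elem \<rho> u w = (\<lambda>y y'. \<Sum>x\<in>UNIV. \<Sum>x'\<in>UNIV. cnj (u x) * \<rho> (x, y) (x', y') * w x')"

definition partial_transpose_Y :: "('x \<times> 'y) cmat \<Rightarrow> ('x \<times> 'y) cmat" where
  "partial_transpose_Y \<rho> = (\<lambda>(x, y) (x', y'). \<rho> (x, y') (x', y))"

definition NPT :: "('x::finite \<times> 'y::finite) cmat \<Rightarrow> bool" where
  "NPT \<rho> \<longleftrightarrow> \<not> psd (partial_transpose_Y \<rho>)"

text \<open>A projective measurement on H_X: a list of orthogonal projectors (outcome a is the
  index a < length M) summing to the identity.\<close>
definition proj_meas :: "'x::finite cmat list \<Rightarrow> bool" where
  "proj_meas M \<longleftrightarrow>
     (\<forall>a<length M. adjoint (M ! a) = M ! a \<and> mat_mult (M ! a) (M ! a) = M ! a) \<and>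
     (\<lambda>i j. \<Sum>a<length M. (M ! a) i j) = id_mat"

text \<open>sigma_{a|M} = tr_X[(Pi_a (x) I_Y) rho].\<close>
definition assemblage :: "('x::finite \<times> 'y::finite) cmat \<Rightarrow> 'x cmat \<Rightarrow> 'y cmat" where
  "assemblage \<rho> P = (\<lambda>y y'. \<Sum>x\<in>UNIV. \<Sum>x''\<in>UNIV. P x x'' * \<rho> (x'', y) (x, y'))"

definition LHS_model ::
  "'l measure \<Rightarrow> ('l \<Rightarrow> 'y cmat) \<Rightarrow> ('x cmat list \<Rightarrow> nat \<Rightarrow> 'l \<Rightarrow> real)
     \<Rightarrow> ('x::finite \<times> 'y::finite) cmat \<Rightarrow> bool" where
  "LHS_model \<mu> \<tau> p \<rho> \<longleftrightarrow>
     prob_space \<mu> \<and>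
     (\<forall>l\<in>space \<mu>. density_matrix (\<tau> l)) \<and>
     (\<forall>y y'. (\<lambda>l. \<tau> l y y') \<in> borel_measurable \<mu>) \<and>
     (\<forall>M. proj_meas M \<longrightarrow>
        (\<forall>a<length M. p M a \<in> borel_measurable \<mu>) \<and>
        (\<forall>a<length M. \<forall>l\<in>space \<mu>. p M a l \<ge> 0) \<and>
        (\<forall>l\<in>space \<mu>. (\<Sum>a<length M. p M a l) = 1) \<and>
        (\<forall>a<length M. assemblage \<rho> (M ! a) =
            (\<lambda>y y'. LINT l|\<mu>. complex_of_real (p M a l) * \<tau> l y y')))"

end

theory Submission
  imports Defs
begin

text \<open>Pick v in the kernel of A with w = B v \<noteq> 0; such a v exists because
  P_supp(A) B P_Ker(A) \<noteq> 0. On alpha0 (x) conj(s v) - alpha1 (x) conj w the partial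
  transpose of rho has expectation Re <w|D|w> - 2 s |w|^2, which is negative for large s.

  Measuring the projector onto alpha0 + t c alpha1 (with |c| = 1) steers Y into
  (A + t (c B + conj c B^*) + t^2 D) / (1 + t^2). As A v = 0, positivity makes its
  (v, v) entry O(t^2), whereas for a suitable c its (w, v) entry is t beta + O(t^2) with
  beta \<noteq> 0. In a local hidden state model both entries are averages of <v|tau|v> and
  <w|tau|v> weighted by the response q_t. Since |<w|tau|v>|^2 \<le> <v|tau|v> <w|tau|w>, hidden
  states with <v|tau|v> \<ge> epsilon contribute O(t^2 / epsilon) to the (w, v) entry, those with
  0 < <v|tau|v> < epsilon have small total probability, and the others contribute nothing;
  so the (w, v) entry is o(t), a contradiction.\<close>

section \<open>Vectors and matrices\<close>

abbreviation braket :: "('a::finite \<Rightarrow> complex) \<Rightarrow> 'a cmat \<Rightarrow> ('a \<Rightarrow> complex) \<Rightarrow> complex" where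
  "braket u M v \<equiv> cinner u (mat_vec M v)"

lemma cinner_add_left: "cinner (\<lambda>i. u i + v i) w = cinner u w + cinner v w"
  by (simp add: cinner_def distrib_right sum.distrib)

lemma cinner_add_right: "cinner u (\<lambda>i. v i + w i) = cinner u v + cinner u w"
  by (simp add: cinner_def distrib_left sum.distrib)

lemma cinner_scale_left: "cinner (\<lambda>i. c * u i) v = cnj c * cinner u v"
  by (simp add: cinner_def sum_distrib_left algebra_simps)

lemma cinner_scale_right: "cinner u (\<lambda>i. c * v i) = c * cinner u v"
  by (simp add: cinner_def sum_distrib_left algebra_simps)

lemma cinner_zero_left [simp]: "cinner (\<lambda>_. 0) v = 0"
  and cinner_zero_right [simp]: "cinner u (\<lambda>_. 0) = 0"
  by (simp_all add: cinner_def)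

lemma cinner_commute: "cinner u v = cnj (cinner v u)"
  by (simp add: cinner_def mult.commute)

lemma cinner_self: "cinner u u = of_real (\<Sum>i\<in>UNIV. (cmod (u i))\<^sup>2)"
  unfolding cinner_def of_real_sum
  by (intro sum.cong refl) (metis complex_norm_square mult.commute)

lemma cinner_self_eq_0_iff: "cinner u u = 0 \<longleftrightarrow> u = (\<lambda>_. 0)"
proof -
  have "cinner u u = 0 \<longleftrightarrow> (\<Sum>i\<in>UNIV. (cmod (u i))\<^sup>2) = 0"
    by (simp only: cinner_self of_real_eq_0_iff)
  also have "\<dots> \<longleftrightarrow> u = (\<lambda>_. 0)"
    by (simp add: sum_nonneg_eq_0_iff fun_eq_iff)
  finally show ?thesis .
qed

lemma cinner_self_pos:
  assumes "u \<noteq> (\<lambda>_. 0)"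
  obtains N where "cinner u u = of_real N" "N > 0"
proof
  show "cinner u u = of_real (\<Sum>i\<in>UNIV. (cmod (u i))\<^sup>2)" by (rule cinner_self)
  have "(\<Sum>i\<in>UNIV. (cmod (u i))\<^sup>2) \<noteq> 0"
    using assms cinner_self_eq_0_iff[of u] by (metis cinner_self of_real_0)
  then show "(\<Sum>i\<in>UNIV. (cmod (u i))\<^sup>2) > 0"
    by (simp add: order_less_le sum_nonneg)
qed

lemma mat_vec_add: "mat_vec M (\<lambda>i. u i + v i) = (\<lambda>i. mat_vec M u i + mat_vec M v i)"
  by (simp add: mat_vec_def distrib_left sum.distrib)

lemma mat_vec_scale: "mat_vec M (\<lambda>i. c * v i) = (\<lambda>i. c * mat_vec M v i)"
  by (simp add: mat_vec_def sum_distrib_left algebra_simps)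

lemma mat_vec_scale_mat: "mat_vec (\<lambda>i j. c * M i j) v = (\<lambda>i. c * mat_vec M v i)"
  by (simp add: mat_vec_def sum_distrib_left mult.assoc)

lemma mat_vec_diff: "mat_vec M (\<lambda>i. u i - v i) = (\<lambda>i. mat_vec M u i - mat_vec M v i)"
  by (simp add: mat_vec_def right_diff_distrib sum_subtractf)

lemma mat_vec_mat_diff: "mat_vec (\<lambda>i j. M i j - N i j) v = (\<lambda>i. mat_vec M v i - mat_vec N v i)"
  by (simp add: mat_vec_def left_diff_distrib sum_subtractf)

lemma mat_vec_zero [simp]: "mat_vec M (\<lambda>_. 0) = (\<lambda>_. 0)"
  by (simp add: mat_vec_def)

definition evec :: "'a \<Rightarrow> 'a \<Rightarrow> complex" where
  "evec k = (\<lambda>j. if j = k then 1 else 0)"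

lemma mat_vec_evec: "mat_vec M (evec k) i = M i k"
  by (simp add: mat_vec_def evec_def if_distrib cong: if_cong)

lemma cinner_evec: "cinner (evec i) v = v i"
  by (simp add: cinner_def evec_def if_distrib[of cnj] if_distrib[of "\<lambda>x. x * _"] cong: if_cong)

lemma mat_eqI: "(\<And>v. mat_vec M v = mat_vec N v) \<Longrightarrow> M = N"
  by (metis ext mat_vec_evec)

lemma mat_vec_mat_mult: "mat_vec (mat_mult M N) v = mat_vec M (mat_vec N v)"
  unfolding mat_vec_def mat_mult_def
  by (auto simp: sum_distrib_left sum_distrib_right mult.assoc intro!: ext sum.swap)

lemma mat_vec_mat_add: "mat_vec (\<lambda>i j. M i j + N i j) v = (\<lambda>i. mat_vec M v i + mat_vec N v i)"
  by (simp add: mat_vec_def distrib_right sum.distrib)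

lemma mat_mult_assoc: "mat_mult (mat_mult L M) N = mat_mult L (mat_mult M N)"
  by (rule mat_eqI) (simp add: mat_vec_mat_mult)

lemma mat_mult_zero_right [simp]: "mat_mult M zero_mat = zero_mat"
  by (simp add: mat_mult_def zero_mat_def)

lemma mat_vec_zero_mat [simp]: "mat_vec zero_mat v = (\<lambda>_. 0)"
  by (simp add: mat_vec_def zero_mat_def)

lemma mat_vec_id_mat [simp]: "mat_vec id_mat v = v"
  by (simp add: mat_vec_def id_mat_def if_distrib[of "\<lambda>x. x * _"] eq_commute[of _ "_::'a"]
      cong: if_cong)

lemma adjoint_mat_add: "adjoint (\<lambda>i j. M i j + N i j) = (\<lambda>i j. adjoint M i j + adjoint N i j)"
  by (simp add: adjoint_def)

lemma adjoint_mat_mult: "adjoint (mat_mult M N) = mat_mult (adjoint N) (adjoint M)"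
  unfolding adjoint_def mat_mult_def by (auto intro!: ext sum.cong simp: mult.commute)

lemma cinner_mat_vec_adjoint: "cinner u (mat_vec M v) = cinner (mat_vec (adjoint M) u) v"
  unfolding cinner_def mat_vec_def adjoint_def
  by (simp add: sum_distrib_left sum_distrib_right mult_ac) (rule sum.swap)

section \<open>Positive semidefinite matrices\<close>

lemma psd_Re_nonneg: "psd M \<Longrightarrow> Re (braket v M v) \<ge> 0"
  unfolding psd_def by auto

lemma psd_braket_real: "psd M \<Longrightarrow> of_real (Re (braket v M v)) = braket v M v"
  unfolding psd_def using of_real_Re by blast

lemma psd_braket_commute:
  assumes "psd M"
  shows "braket v M w = cnj (braket w M v)"
proof -
  define S where "S a b = braket a M b" for a b
  have real: "S a a \<in> \<real>" for a using assms unfolding psd_def S_def by auto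
  have "S (\<lambda>i. v i + w i) (\<lambda>i. v i + w i) = S v v + S v w + S w v + S w w"
    unfolding S_def by (simp add: mat_vec_add cinner_add_left cinner_add_right)
  then have "Im (S v w + S w v) = 0"
    using real[of "\<lambda>i. v i + w i"] real[of v] real[of w] by (auto simp: complex_is_Real_iff)
  moreover have "S (\<lambda>i. v i + \<i> * w i) (\<lambda>i. v i + \<i> * w i) = S v v + \<i> * S v w - \<i> * S w v + S w w"
    unfolding S_def
    by (simp add: mat_vec_add mat_vec_scale cinner_add_left cinner_add_right
        cinner_scale_left cinner_scale_right)
  then have "Re (S v w - S w v) = 0"
    using real[of "\<lambda>i. v i + \<i> * w i"] real[of v] real[of w] by (auto simp: complex_is_Real_iff)
  ultimately show ?thesis by (simp add: S_def complex_eq_iff)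
qed

lemma psd_cauchy_schwarz:
  assumes "psd M" and "\<eta> > 0"
  shows "cmod (braket w M v) \<le> (\<eta> * Re (braket w M w) + Re (braket v M v) / \<eta>) / 2"
proof (cases "braket w M v = 0")
  case True
  then show ?thesis
    using assms psd_Re_nonneg[OF assms(1), of w] psd_Re_nonneg[OF assms(1), of v] by simp
next
  case False
  define g where "g = braket w M v"
  \<comment> \<open>Expand the form at a w + v, with a of modulus \<eta> and phase opposite to g.\<close>
  define a where "a = - of_real \<eta> * g / of_real (cmod g)"
  have g: "cmod g > 0" using False by (simp add: g_def)
  have gg: "cnj g * g = of_real (cmod g) * of_real (cmod g)"
    using complex_norm_square[of g] by (simp add: power2_eq_square mult.commute)
  have "cnj a * a = of_real \<eta> * of_real \<eta> * (cnj g * g) / (of_real (cmod g) * of_real (cmod g))"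
    by (simp add: a_def)
  then have aa: "cnj a * a = of_real (\<eta>\<^sup>2)"
    using g unfolding gg by (simp add: power2_eq_square)
  have "cnj a * g = - of_real \<eta> * (cnj g * g) / of_real (cmod g)"
    by (simp add: a_def)
  then have ag: "cnj a * g = - of_real (\<eta> * cmod g)"
    using g unfolding gg by simp
  have "braket (\<lambda>i. a * w i + v i) M (\<lambda>i. a * w i + v i)
        = cnj a * a * braket w M w + cnj a * g + cnj (cnj a * g) + braket v M v"
    using psd_braket_commute[OF assms(1), of v w]
    by (simp add: mat_vec_add mat_vec_scale cinner_add_left cinner_add_right cinner_scale_left
        cinner_scale_right g_def algebra_simps)
  then have "Re (braket (\<lambda>i. a * w i + v i) M (\<lambda>i. a * w i + v i))
        = \<eta>\<^sup>2 * Re (braket w M w) - 2 * \<eta> * cmod g + Re (braket v M v)"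
    unfolding aa ag by simp
  then have "2 * \<eta> * cmod g \<le> \<eta>\<^sup>2 * Re (braket w M w) + Re (braket v M v)"
    using psd_Re_nonneg[OF assms(1), of "\<lambda>i. a * w i + v i"] by linarith
  then show ?thesis
    using assms(2) by (simp add: g_def field_simps power2_eq_square)
qed

lemma density_matrix_entry_bound:
  assumes "density_matrix \<tau>"
  shows "cmod (\<tau> i j) \<le> 1"
proof -
  have psd: "psd \<tau>" and tr: "mat_trace \<tau> = 1"
    using assms by (auto simp: density_matrix_def)
  have diag: "0 \<le> Re (\<tau> k k)" for k
    using psd_Re_nonneg[OF psd, of "evec k"] by (simp add: cinner_evec mat_vec_evec)
  have diag_le: "Re (\<tau> k k) \<le> 1" for k
  proof -
    have "Re (\<tau> k k) \<le> (\<Sum>m\<in>UNIV. Re (\<tau> m m))"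
      using diag by (intro member_le_sum) auto
    also have "\<dots> = Re (mat_trace \<tau>)"
      by (simp add: mat_trace_def)
    also have "\<dots> = 1"
      using tr by simp
    finally show ?thesis .
  qed
  have "cmod (\<tau> i j) \<le> (Re (\<tau> i i) + Re (\<tau> j j)) / 2"
    using psd_cauchy_schwarz[OF psd, of 1 "evec i" "evec j"] by (simp add: cinner_evec mat_vec_evec)
  also have "\<dots> \<le> (1 + 1) / 2"
    using diag_le[of i] diag_le[of j] by (intro divide_right_mono add_mono) auto
  finally show ?thesis by simp
qed

lemma braket_bound:
  assumes "\<And>i j. cmod (M i j) \<le> 1"
  shows "cmod (braket a M b) \<le> (\<Sum>i\<in>UNIV. cmod (a i)) * (\<Sum>j\<in>UNIV. cmod (b j))"
proof -
  have "cmod (braket a M b) = cmod (\<Sum>i\<in>UNIV. \<Sum>j\<in>UNIV. cnj (a i) * M i j * b j)"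
    by (simp add: cinner_def mat_vec_def sum_distrib_left mult.assoc)
  also have "\<dots> \<le> (\<Sum>i\<in>UNIV. \<Sum>j\<in>UNIV. cmod (a i) * cmod (b j))"
  proof (intro order_trans[OF norm_sum] sum_mono)
    fix i j
    have "cmod (M i j) * (cmod (a i) * cmod (b j)) \<le> 1 * (cmod (a i) * cmod (b j))"
      using assms by (intro mult_right_mono) auto
    then show "cmod (cnj (a i) * M i j * b j) \<le> cmod (a i) * cmod (b j)"
      by (simp add: norm_mult mult_ac)
  qed
  also have "\<dots> = (\<Sum>i\<in>UNIV. cmod (a i)) * (\<Sum>j\<in>UNIV. cmod (b j))"
    by (simp add: sum_product)
  finally show ?thesis .
qed

lemma density_matrix_braket_self_bound:
  assumes "density_matrix \<tau>"
  shows "0 \<le> Re (braket u \<tau> u) \<and>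
    Re (braket u \<tau> u) \<le> (\<Sum>i\<in>UNIV. cmod (u i)) * (\<Sum>i\<in>UNIV. cmod (u i))"
proof -
  have "0 \<le> Re (braket u \<tau> u)"
    using assms psd_Re_nonneg by (auto simp: density_matrix_def)
  moreover have "Re (braket u \<tau> u) \<le> cmod (braket u \<tau> u)"
    by (rule complex_Re_le_cmod)
  moreover have "cmod (braket u \<tau> u) \<le> (\<Sum>i\<in>UNIV. cmod (u i)) * (\<Sum>i\<in>UNIV. cmod (u i))"
    by (rule braket_bound[OF density_matrix_entry_bound[OF assms]])
  ultimately show ?thesis
    by linarith
qed

section \<open>Orthogonal projectors\<close>

definition is_projector :: "'a::finite cmat \<Rightarrow> bool" where
  "is_projector P \<longleftrightarrow> adjoint P = P \<and> mat_mult P P = P"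

lemma is_orth_projector_iff: "is_orth_projector P S \<longleftrightarrow> is_projector P \<and> range (mat_vec P) = S"
  by (auto simp: is_orth_projector_def is_projector_def)

lemma projector_fixes_range:
  assumes "mat_mult P P = P" "v \<in> range (mat_vec P)"
  shows "mat_vec P v = v"
  using assms by (metis imageE mat_vec_mat_mult)

lemma orth_projector_unique:
  assumes "is_orth_projector P S" "is_orth_projector Q S"
  shows "P = Q"
proof -
  have PQ: "mat_mult P Q = Q" and QP: "mat_mult Q P = P"
    using assms unfolding is_orth_projector_def
    by (metis mat_eqI mat_vec_mat_mult projector_fixes_range rangeI)+
  have "P = adjoint (mat_mult Q P)"
    using QP assms by (simp add: is_orth_projector_def)
  also have "\<dots> = mat_mult P Q"
    using assms by (simp add: adjoint_mat_mult is_orth_projector_def)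
  finally show ?thesis using PQ by simp
qed

lemma projector_diag_le_1:
  assumes "is_projector P"
  shows "Re (P i i) \<le> 1"
proof -
  have Pc: "P j k = cnj (P k j)" for j k
    using fun_cong[OF fun_cong[OF conjunct1[OF assms[unfolded is_projector_def]]], of j k]
    by (simp add: adjoint_def)
  define r where "r = (\<Sum>j\<in>UNIV. (cmod (P j i))\<^sup>2)"
  have "P i i = (\<Sum>j\<in>UNIV. P i j * P j i)"
    using assms by (metis is_projector_def mat_mult_def)
  also have "\<dots> = cinner (\<lambda>j. P j i) (\<lambda>j. P j i)"
    unfolding cinner_def by (metis Pc)
  finally have Pii: "P i i = of_real r"
    unfolding cinner_self r_def .
  have "(cmod (P i i))\<^sup>2 \<le> r"
    unfolding r_def by (rule member_le_sum) auto
  then have "r * r \<le> r * 1"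
    by (simp add: Pii power2_eq_square)
  moreover have "r \<ge> 0"
    unfolding r_def by (simp add: sum_nonneg)
  ultimately have "r \<le> 1"
    by (metis mult_le_cancel_left_pos order.order_iff_strict mult_zero_left zero_le_one)
  then show ?thesis by (simp add: Pii)
qed

lemma projector_trace_le:
  fixes P :: "'a::finite cmat"
  assumes "is_projector P"
  shows "Re (mat_trace P) \<le> CARD('a)"
proof -
  have "Re (mat_trace P) = (\<Sum>i\<in>UNIV. Re (P i i))"
    by (simp add: mat_trace_def)
  also have "\<dots> \<le> (\<Sum>i\<in>(UNIV::'a set). 1)"
    by (intro sum_mono projector_diag_le_1[OF assms])
  finally show ?thesis by simp
qed

lemma is_projector_complement:
  assumes "is_projector P"
  shows "is_projector (\<lambda>i j. id_mat i j - P i j)"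
proof -
  have "adjoint P = P" and PP: "mat_vec P (mat_vec P v) = mat_vec P v" for v
    using assms by (auto simp: is_projector_def simp flip: mat_vec_mat_mult)
  then have "adjoint (\<lambda>i j. id_mat i j - P i j) = (\<lambda>i j. id_mat i j - P i j)"
    by (auto simp: adjoint_def id_mat_def fun_eq_iff)
  moreover have "mat_mult (\<lambda>i j. id_mat i j - P i j) (\<lambda>i j. id_mat i j - P i j) = (\<lambda>i j. id_mat i j - P i j)"
    by (rule mat_eqI) (simp add: mat_vec_mat_mult mat_vec_mat_diff mat_vec_diff PP)
  ultimately show ?thesis
    unfolding is_projector_def ..
qed

definition csubspace :: "('a \<Rightarrow> complex) set \<Rightarrow> bool" where
  "csubspace S \<longleftrightarrow> (\<lambda>_. 0) \<in> S \<and> (\<forall>u\<in>S. \<forall>v\<in>S. (\<lambda>i. u i + v i) \<in> S) \<and>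
     (\<forall>c. \<forall>u\<in>S. (\<lambda>i. c * u i) \<in> S)"

lemma csubspace_add: "csubspace S \<Longrightarrow> u \<in> S \<Longrightarrow> v \<in> S \<Longrightarrow> (\<lambda>i. u i + v i) \<in> S"
  and csubspace_scale: "csubspace S \<Longrightarrow> u \<in> S \<Longrightarrow> (\<lambda>i. c * u i) \<in> S"
  unfolding csubspace_def by blast+

lemma csubspace_mat_kernel: "csubspace (mat_kernel A)"
  unfolding csubspace_def mat_kernel_def by (auto simp: mat_vec_add mat_vec_scale)

definition proj_onto :: "('a::finite \<Rightarrow> complex) \<Rightarrow> 'a cmat" where
  "proj_onto \<psi> = (\<lambda>i j. \<psi> i * cnj (\<psi> j) / cinner \<psi> \<psi>)"

lemma mat_vec_proj_onto: "mat_vec (proj_onto \<psi>) v = (\<lambda>i. cinner \<psi> v / cinner \<psi> \<psi> * \<psi> i)"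
  by (auto simp: proj_onto_def mat_vec_def cinner_def sum_distrib_left sum_divide_distrib mult_ac)

lemma is_projector_proj_onto:
  assumes "\<psi> \<noteq> (\<lambda>_. 0)"
  shows "is_projector (proj_onto \<psi>)"
proof -
  have N: "cinner \<psi> \<psi> \<noteq> 0" and "cnj (cinner \<psi> \<psi>) = cinner \<psi> \<psi>"
    using assms cinner_self_eq_0_iff by (auto intro: cinner_commute[symmetric])
  then have "adjoint (proj_onto \<psi>) = proj_onto \<psi>"
    by (auto simp: adjoint_def proj_onto_def mult.commute)
  moreover have "mat_mult (proj_onto \<psi>) (proj_onto \<psi>) = proj_onto \<psi>"
    using N
    by (intro mat_eqI) (simp only: mat_vec_mat_mult mat_vec_proj_onto cinner_scale_right, simp)
  ultimately show ?thesis unfolding is_projector_def ..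
qed

lemma mat_trace_proj_onto:
  assumes "\<psi> \<noteq> (\<lambda>_. 0)"
  shows "mat_trace (proj_onto \<psi>) = 1"
proof -
  have "mat_trace (proj_onto \<psi>) = cinner \<psi> \<psi> / cinner \<psi> \<psi>"
    by (simp add: mat_trace_def proj_onto_def cinner_def sum_divide_distrib[symmetric] mult.commute)
  moreover have "cinner \<psi> \<psi> \<noteq> 0"
    using assms cinner_self_eq_0_iff by blast
  ultimately show ?thesis by simp
qed

lemma projector_extend:
  assumes S: "csubspace S" and P: "is_projector P" "range (mat_vec P) \<subseteq> S"
    and x: "x \<in> S" "x \<notin> range (mat_vec P)"
  obtains P' where "is_projector P'" "range (mat_vec P') \<subseteq> S"
    "Re (mat_trace P') = Re (mat_trace P) + 1"
proof
  define u where "u = (\<lambda>i. x i + (-1) * mat_vec P x i)"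
  define P' where "P' = (\<lambda>i j. P i j + proj_onto u i j)"
  have PP: "mat_vec P (mat_vec P v) = mat_vec P v" for v
    using P(1) by (metis is_projector_def mat_vec_mat_mult)
  have u: "u \<in> S"
    unfolding u_def using P(2) by (intro csubspace_add[OF S x(1)] csubspace_scale[OF S]) auto
  have Pu: "mat_vec P u = (\<lambda>_. 0)"
    unfolding u_def mat_vec_add mat_vec_scale PP by simp
  have uP: "cinner u (mat_vec P v) = 0" for v
    using P(1) by (simp add: cinner_mat_vec_adjoint is_projector_def Pu)
  have "u \<noteq> (\<lambda>_. 0)"
  proof
    assume "u = (\<lambda>_. 0)"
    then have "x = mat_vec P x" by (auto simp: u_def fun_eq_iff)
    with x(2) show False by (metis rangeI)
  qed
  then have N: "cinner u u \<noteq> 0" and Q: "is_projector (proj_onto u)"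
    using cinner_self_eq_0_iff is_projector_proj_onto by auto
  have P'v: "mat_vec P' v = (\<lambda>i. mat_vec P v i + cinner u v / cinner u u * u i)" for v
    by (simp add: P'_def mat_vec_mat_add mat_vec_proj_onto)
  have "adjoint P' = P'"
    using P(1) Q by (simp add: P'_def adjoint_mat_add is_projector_def)
  moreover have "mat_mult P' P' = P'"
    by (rule mat_eqI) (simp only: mat_vec_mat_mult P'v mat_vec_add mat_vec_scale PP Pu uP
        cinner_add_right cinner_scale_right, simp add: N)
  ultimately show "is_projector P'"
    unfolding is_projector_def ..
  show "range (mat_vec P') \<subseteq> S"
  proof safe
    fix v
    show "mat_vec P' v \<in> S"
      unfolding P'v using P(2) by (intro csubspace_add[OF S] csubspace_scale[OF S u]) auto
  qed
  show "Re (mat_trace P') = Re (mat_trace P) + 1"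
    using mat_trace_proj_onto[OF \<open>u \<noteq> (\<lambda>_. 0)\<close>]
    by (simp add: P'_def mat_trace_def sum.distrib)
qed

lemma projector_onto_csubspace_or_trace_ge:
  assumes S: "csubspace S"
  shows "\<exists>P. is_projector P \<and> range (mat_vec P) \<subseteq> S \<and>
           (range (mat_vec P) = S \<or> real n \<le> Re (mat_trace P))"
proof (induction n)
  case 0
  have "is_projector zero_mat"
    by (simp add: is_projector_def adjoint_def zero_mat_def mat_mult_def)
  moreover have "range (mat_vec zero_mat) \<subseteq> S"
    using S by (auto simp: csubspace_def)
  ultimately show ?case
    by (intro exI[of _ zero_mat]) (simp add: mat_trace_def zero_mat_def)
next
  case (Suc n)
  then obtain P where P: "is_projector P" "range (mat_vec P) \<subseteq> S"
    and n: "range (mat_vec P) = S \<or> real n \<le> Re (mat_trace P)"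
    by blast
  show ?case
  proof (cases "range (mat_vec P) = S")
    case True
    with P show ?thesis by blast
  next
    case False
    with P(2) obtain x where "x \<in> S" "x \<notin> range (mat_vec P)" by blast
    from projector_extend[OF S P this] obtain P' where "is_projector P'"
      "range (mat_vec P') \<subseteq> S" "Re (mat_trace P') = Re (mat_trace P) + 1" .
    with n False show ?thesis by (intro exI[of _ P']) auto
  qed
qed

lemma is_orth_projector_orth_proj:
  fixes S :: "('a::finite \<Rightarrow> complex) set"
  assumes "csubspace S"
  shows "is_orth_projector (orth_proj S) S"
proof -
  obtain P where "is_projector P" "range (mat_vec P) \<subseteq> S"
    "range (mat_vec P) = S \<or> real (Suc CARD('a)) \<le> Re (mat_trace P)"
    using projector_onto_csubspace_or_trace_ge[OF assms] by blast
  with projector_trace_le[of P] have P: "is_orth_projector P S"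
    by (auto simp: is_orth_projector_iff)
  show ?thesis
    unfolding orth_proj_def
    by (rule theI[where P = "\<lambda>P. is_orth_projector P S", OF P]) (rule orth_projector_unique[OF _ P])
qed

lemma kernel_vector_not_annihilated:
  assumes "mat_mult (mat_mult Q B) (orth_proj (mat_kernel A)) \<noteq> zero_mat"
  obtains v where "mat_vec A v = (\<lambda>_. 0)" "mat_vec B v \<noteq> (\<lambda>_. 0)"
proof -
  define K where "K = orth_proj (mat_kernel A)"
  have "mat_mult B K \<noteq> zero_mat"
    using assms by (auto simp: K_def mat_mult_assoc)
  then obtain u where "mat_vec B (mat_vec K u) \<noteq> (\<lambda>_. 0)"
    using mat_eqI[of "mat_mult B K" zero_mat] by (auto simp: mat_vec_mat_mult)
  moreover have "mat_vec K u \<in> mat_kernel A"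
    using is_orth_projector_orth_proj[OF csubspace_mat_kernel]
    by (auto simp: K_def is_orth_projector_def)
  ultimately show ?thesis
    using that by (simp add: mat_kernel_def)
qed

section \<open>Partial matrix elements and the partial transpose\<close>

definition tensor :: "('x \<Rightarrow> complex) \<Rightarrow> ('y \<Rightarrow> complex) \<Rightarrow> ('x \<times> 'y \<Rightarrow> complex)" where
  "tensor u v = (\<lambda>(x, y). u x * v y)"

lemma tensor_add_left: "tensor (\<lambda>x. u x + u' x) v = (\<lambda>z. tensor u v z + tensor u' v z)"
  by (auto simp: tensor_def distrib_right)

lemma tensor_scale_left: "tensor (\<lambda>x. c * u x) v = (\<lambda>z. c * tensor u v z)"
  by (auto simp: tensor_def)

lemma sum_UNIV_prod:
  "(\<Sum>z\<in>(UNIV::('a::finite \<times> 'b::finite) set). f z) = (\<Sum>x\<in>UNIV. \<Sum>y\<in>UNIV. f (x, y))"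
  by (simp add: sum.cartesian_product UNIV_Times_UNIV[symmetric] del: UNIV_Times_UNIV)

lemma sum_swap_inner:
  "(\<Sum>a\<in>A. \<Sum>b\<in>B. \<Sum>c\<in>C. f a b c) = (\<Sum>a\<in>A. \<Sum>c\<in>C. \<Sum>b\<in>B. f a b c)"
  by (rule sum.cong[OF refl], rule sum.swap)

lemma braket_partial_elem:
  "braket v (partial_elem \<rho> u u') w = braket (tensor u v) \<rho> (tensor u' w)"
proof -
  have "braket v (partial_elem \<rho> u u') w =
    (\<Sum>y\<in>UNIV. \<Sum>y'\<in>UNIV. \<Sum>x\<in>UNIV. \<Sum>x'\<in>UNIV. cnj (u x) * cnj (v y) * \<rho> (x, y) (x', y') * u' x' * w y')"
    by (simp add: cinner_def mat_vec_def partial_elem_def sum_distrib_left sum_distrib_right mult_ac)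
  also have "\<dots> =
    (\<Sum>x\<in>UNIV. \<Sum>y\<in>UNIV. \<Sum>x'\<in>UNIV. \<Sum>y'\<in>UNIV. cnj (u x) * cnj (v y) * \<rho> (x, y) (x', y') * u' x' * w y')"
    by (subst sum_swap_inner, subst sum.swap, subst sum_swap_inner[THEN sum.cong[OF refl]]) (rule refl)
  also have "\<dots> = braket (tensor u v) \<rho> (tensor u' w)"
    by (simp add: cinner_def mat_vec_def tensor_def sum_UNIV_prod sum_distrib_left sum_distrib_right mult_ac)
  finally show ?thesis .
qed

lemma braket_partial_transpose_Y:
  "braket (tensor a (\<lambda>y. cnj (U y))) (partial_transpose_Y \<rho>) (tensor b (\<lambda>y. cnj (Z y))) =
   braket Z (partial_elem \<rho> a b) U"
proof -
  have "braket Z (partial_elem \<rho> a b) U =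
    (\<Sum>y'\<in>UNIV. \<Sum>y\<in>UNIV. \<Sum>x\<in>UNIV. \<Sum>x'\<in>UNIV. cnj (a x) * U y * \<rho> (x, y') (x', y) * b x' * cnj (Z y'))"
    by (simp add: cinner_def mat_vec_def partial_elem_def sum_distrib_left sum_distrib_right mult_ac)
  also have "\<dots> =
    (\<Sum>x\<in>UNIV. \<Sum>y\<in>UNIV. \<Sum>x'\<in>UNIV. \<Sum>y'\<in>UNIV. cnj (a x) * U y * \<rho> (x, y') (x', y) * b x' * cnj (Z y'))"
    by (subst sum.swap, subst sum_swap_inner, subst sum.swap,
        subst sum_swap_inner[THEN sum.cong[OF refl]]) (rule refl)
  also have "\<dots> = braket (tensor a (\<lambda>y. cnj (U y))) (partial_transpose_Y \<rho>) (tensor b (\<lambda>y. cnj (Z y)))"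
    by (simp add: cinner_def mat_vec_def tensor_def sum_UNIV_prod partial_transpose_Y_def
        sum_distrib_left sum_distrib_right mult_ac)
  finally show ?thesis ..
qed

lemma psd_partial_elem_commute:
  assumes "psd \<rho>"
  shows "braket v (partial_elem \<rho> u' u) w = cnj (braket w (partial_elem \<rho> u u') v)"
  unfolding braket_partial_elem by (rule psd_braket_commute[OF assms])

lemma NPT_of_kernel_vector:
  assumes psd: "psd \<rho>"
    and Av: "mat_vec (partial_elem \<rho> \<alpha>0 \<alpha>0) v = (\<lambda>_. 0)"
    and Bv: "mat_vec (partial_elem \<rho> \<alpha>0 \<alpha>1) v \<noteq> (\<lambda>_. 0)"
  shows "NPT \<rho>"
  unfolding NPT_def
proof
  assume "psd (partial_transpose_Y \<rho>)"
  define w where "w = mat_vec (partial_elem \<rho> \<alpha>0 \<alpha>1) v"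
  obtain N where N: "cinner w w = of_real N" "N > 0"
    using cinner_self_pos Bv unfolding w_def by blast
  define \<delta> where "\<delta> = Re (braket w (partial_elem \<rho> \<alpha>1 \<alpha>1) w)"
  define s where "s = (\<bar>\<delta>\<bar> + 1) / N"
  have sN: "s * N = \<bar>\<delta>\<bar> + 1"
    using N(2) by (simp add: s_def)
  define \<psi> where "\<psi> = (\<lambda>z. tensor \<alpha>0 (\<lambda>y. cnj (of_real s * v y)) z + tensor \<alpha>1 (\<lambda>y. cnj ((-1) * w y)) z)"
  have cross: "braket v (partial_elem \<rho> \<alpha>1 \<alpha>0) w = of_real N"
    using N by (simp add: psd_partial_elem_commute[OF psd] w_def[symmetric])
  have "braket \<psi> (partial_transpose_Y \<rho>) \<psi> =
      braket (\<lambda>y. of_real s * v y) (partial_elem \<rho> \<alpha>0 \<alpha>0) (\<lambda>y. of_real s * v y)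
    + braket (\<lambda>y. (-1) * w y) (partial_elem \<rho> \<alpha>0 \<alpha>1) (\<lambda>y. of_real s * v y)
    + braket (\<lambda>y. of_real s * v y) (partial_elem \<rho> \<alpha>1 \<alpha>0) (\<lambda>y. (-1) * w y)
    + braket (\<lambda>y. (-1) * w y) (partial_elem \<rho> \<alpha>1 \<alpha>1) (\<lambda>y. (-1) * w y)"
    unfolding \<psi>_def mat_vec_add cinner_add_left cinner_add_right braket_partial_transpose_Y
    by simp
  also have "\<dots> = - 2 * of_real (s * N) + braket w (partial_elem \<rho> \<alpha>1 \<alpha>1) w"
    unfolding mat_vec_scale cinner_scale_left cinner_scale_right Av cross w_def[symmetric] N(1)
    by simp
  finally have "Re (braket \<psi> (partial_transpose_Y \<rho>) \<psi>) = \<delta> - 2 * \<bar>\<delta>\<bar> - 2"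
    by (simp add: sN \<delta>_def)
  with psd_Re_nonneg[OF \<open>psd (partial_transpose_Y \<rho>)\<close>, of \<psi>] abs_ge_zero[of \<delta>] abs_ge_self[of \<delta>]
  show False
    by linarith
qed

section \<open>Responses in a local hidden state model\<close>

lemma proj_meas_complement:
  assumes "is_projector P"
  shows "proj_meas [P, \<lambda>i j. id_mat i j - P i j]"
  using assms is_projector_complement[OF assms]
  by (auto simp: proj_meas_def is_projector_def numeral_2_eq_2 less_Suc_eq)

lemma measurable_braket:
  assumes "\<And>y y'. (\<lambda>l. \<tau> l y y') \<in> borel_measurable \<mu>"
  shows "(\<lambda>l. braket a (\<tau> l) b) \<in> borel_measurable \<mu>"
  unfolding cinner_def mat_vec_def using assms by measurable

lemma integral_braket:
  assumes "\<And>y y'. integrable \<mu> (\<lambda>l. F l y y')"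
  shows "braket a (\<lambda>y y'. LINT l|\<mu>. F l y y') b = (LINT l|\<mu>. braket a (F l) b)"
  using assms by (simp add: cinner_def mat_vec_def)

lemma LHS_model_projector_response:
  assumes model: "LHS_model \<mu> \<tau> p \<rho>" and P: "is_projector P"
  obtains q where "q \<in> borel_measurable \<mu>" "\<forall>l\<in>space \<mu>. 0 \<le> q l \<and> q l \<le> 1"
    "\<And>a b. braket a (assemblage \<rho> P) b = (LINT l|\<mu>. of_real (q l) * braket a (\<tau> l) b)"
proof -
  define M where "M = [P, \<lambda>i j. id_mat i j - P i j]"
  have "proj_meas M"
    unfolding M_def by (rule proj_meas_complement[OF P])
  with model have meas: "\<forall>a<length M. p M a \<in> borel_measurable \<mu>"
    and nonneg: "\<forall>a<length M. \<forall>l\<in>space \<mu>. 0 \<le> p M a l"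
    and total: "\<forall>l\<in>space \<mu>. (\<Sum>a<length M. p M a l) = 1"
    and \<sigma>: "\<forall>a<length M. assemblage \<rho> (M ! a) = (\<lambda>y y'. LINT l|\<mu>. of_real (p M a l) * \<tau> l y y')"
    unfolding LHS_model_def by blast+
  have M: "length M = 2" "M ! 0 = P"
    by (simp_all add: M_def)
  interpret prob_space \<mu>
    using model by (simp add: LHS_model_def)
  define q where "q = p M 0"
  have q_meas: "q \<in> borel_measurable \<mu>"
    using meas by (simp add: q_def M)
  have q: "\<forall>l\<in>space \<mu>. 0 \<le> q l \<and> q l \<le> 1"
    using nonneg total by (force simp: q_def M numeral_2_eq_2)
  have "integrable \<mu> (\<lambda>l. of_real (q l) * \<tau> l y y')" for y y'
  proof (rule integrable_const_bound[OF AE_I2])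
    show "norm (of_real (q l) * \<tau> l y y') \<le> 1" if "l \<in> space \<mu>" for l
      using q that mult_mono[of "q l" 1 "cmod (\<tau> l y y')" 1]
        density_matrix_entry_bound[of "\<tau> l" y y'] model
      by (auto simp: norm_mult LHS_model_def)
    have "(\<lambda>l. \<tau> l y y') \<in> borel_measurable \<mu>"
      using model by (simp add: LHS_model_def)
    with q_meas show "(\<lambda>l. of_real (q l) * \<tau> l y y') \<in> borel_measurable \<mu>"
      by measurable
  qed
  moreover have "assemblage \<rho> P = (\<lambda>y y'. LINT l|\<mu>. of_real (q l) * \<tau> l y y')"
    using \<sigma>[rule_format, of 0] by (simp add: q_def M)
  ultimately have "braket a (assemblage \<rho> P) b = (LINT l|\<mu>. of_real (q l) * braket a (\<tau> l) b)" for a b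
    by (simp add: integral_braket mat_vec_scale_mat cinner_scale_right)
  with q_meas q show ?thesis
    using that by blast
qed

lemma assemblage_proj_onto:
  "assemblage \<rho> (proj_onto \<psi>) = (\<lambda>y y'. inverse (cinner \<psi> \<psi>) * partial_elem \<rho> \<psi> \<psi> y y')"
  unfolding assemblage_def proj_onto_def partial_elem_def
  by (intro ext, subst sum.swap) (simp add: sum_distrib_left divide_inverse mult_ac)

lemma braket_partial_elem_superpos:
  "braket a (partial_elem \<rho> (\<lambda>x. u x + z * u' x) (\<lambda>x. u x + z * u' x)) b =
     braket a (partial_elem \<rho> u u) b + z * braket a (partial_elem \<rho> u u') b
     + cnj z * braket a (partial_elem \<rho> u' u) b + cnj z * z * braket a (partial_elem \<rho> u' u') b"
  unfolding braket_partial_elem tensor_add_left tensor_scale_left mat_vec_add mat_vec_scale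
    cinner_add_left cinner_add_right cinner_scale_left cinner_scale_right
  by (simp add: algebra_simps)

lemma LHS_model_superpos_response:
  assumes orthonormal: "cinner \<alpha>0 \<alpha>0 = 1" "cinner \<alpha>1 \<alpha>1 = 1" "cinner \<alpha>0 \<alpha>1 = 0"
    and model: "LHS_model \<mu> \<tau> p \<rho>"
  obtains q where "q \<in> borel_measurable \<mu>" "\<forall>l\<in>space \<mu>. 0 \<le> q l \<and> q l \<le> 1"
    "\<And>a b. braket a (partial_elem \<rho> \<alpha>0 \<alpha>0) b + z * braket a (partial_elem \<rho> \<alpha>0 \<alpha>1) b
      + cnj z * braket a (partial_elem \<rho> \<alpha>1 \<alpha>0) b + cnj z * z * braket a (partial_elem \<rho> \<alpha>1 \<alpha>1) b
      = (1 + cnj z * z) * (LINT l|\<mu>. of_real (q l) * braket a (\<tau> l) b)"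
proof -
  define \<psi> where "\<psi> = (\<lambda>x. \<alpha>0 x + z * \<alpha>1 x)"
  have "cinner \<alpha>1 \<alpha>0 = 0"
    using orthonormal(3) cinner_commute[of \<alpha>1 \<alpha>0] by simp
  then have N: "cinner \<psi> \<psi> = 1 + cnj z * z"
    using orthonormal by (simp add: \<psi>_def cinner_add_left cinner_add_right cinner_scale_left
        cinner_scale_right)
  have "1 + cnj z * z = of_real (1 + (cmod z)\<^sup>2)"
    using complex_norm_square[of z] by (simp add: mult.commute)
  moreover have "1 + (cmod z)\<^sup>2 \<noteq> 0"
    using add_pos_nonneg[OF zero_less_one zero_le_power2[of "cmod z"]] by linarith
  ultimately have N0: "1 + cnj z * z \<noteq> 0"
    by (metis of_real_eq_0_iff)
  then have "\<psi> \<noteq> (\<lambda>_. 0)"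
    using N by auto
  from LHS_model_projector_response[OF model is_projector_proj_onto[OF this]]
  obtain q where "q \<in> borel_measurable \<mu>" "\<forall>l\<in>space \<mu>. 0 \<le> q l \<and> q l \<le> 1"
    and resp: "\<And>a b. braket a (assemblage \<rho> (proj_onto \<psi>)) b = (LINT l|\<mu>. of_real (q l) * braket a (\<tau> l) b)"
    by blast
  moreover have "braket a (partial_elem \<rho> \<psi> \<psi>) b = (1 + cnj z * z) * (LINT l|\<mu>. of_real (q l) * braket a (\<tau> l) b)"
    for a b
  proof -
    have "inverse (1 + cnj z * z) * braket a (partial_elem \<rho> \<psi> \<psi>) b
        = (LINT l|\<mu>. of_real (q l) * braket a (\<tau> l) b)"
      using resp[of a b] unfolding assemblage_proj_onto mat_vec_scale_mat cinner_scale_right N .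
    then show ?thesis
      using N0 by (auto simp: field_simps)
  qed
  ultimately show ?thesis
    using that unfolding \<psi>_def braket_partial_elem_superpos by blast
qed

section \<open>Hidden-state averages of a Cauchy-Schwarz cross term\<close>

lemma measure_small_level_set:
  fixes f :: "'a \<Rightarrow> real"
  assumes "finite_measure \<mu>" "f \<in> borel_measurable \<mu>" "\<delta> > 0"
  obtains \<epsilon> where "0 < \<epsilon>" "\<epsilon> \<le> 1" "measure \<mu> {l \<in> space \<mu>. f l \<in> {0<..\<epsilon>}} < \<delta>"
proof -
  interpret finite_measure \<mu> by (rule assms(1))
  define E where "E n = {l \<in> space \<mu>. f l \<in> {0<..1 / real (Suc n)}}" for n
  have "E n \<in> sets \<mu>" for n
    unfolding E_def using assms(2) by measurable
  moreover have "decseq E"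
  proof (rule decseq_SucI)
    fix n
    have "1 / real (Suc (Suc n)) \<le> 1 / real (Suc n)"
      by (rule frac_le) auto
    then show "E (Suc n) \<subseteq> E n"
      by (auto simp: E_def simp del: of_nat_Suc)
  qed
  ultimately have "(\<lambda>n. measure \<mu> (E n)) \<longlonglongrightarrow> measure \<mu> (\<Inter>n. E n)"
    by (intro finite_Lim_measure_decseq) auto
  moreover have "(\<Inter>n. E n) = {}"
  proof safe
    fix l assume "l \<in> (\<Inter>n. E n)"
    then have "0 < f l" "\<And>n. f l \<le> 1 / real (Suc n)"
      by (auto simp: E_def)
    moreover obtain n where "inverse (real (Suc n)) < f l"
      using reals_Archimedean \<open>0 < f l\<close> by blast
    ultimately show "l \<in> {}"
      by (metis inverse_eq_divide not_le)
  qed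
  ultimately have "(\<lambda>n. measure \<mu> (E n)) \<longlonglongrightarrow> 0"
    by simp
  then have "eventually (\<lambda>n. measure \<mu> (E n) < \<delta>) sequentially"
    using assms(3) by (rule order_tendstoD)
  then obtain n where "measure \<mu> (E n) < \<delta>"
    by (auto simp: eventually_sequentially)
  then show ?thesis
    by (intro that[of "1 / real (Suc n)"]) (auto simp: E_def)
qed

text \<open>The hypothesis on g is the AM-GM form of g^2 \<le> f h.\<close>

lemma am_gm_family_bound:
  fixes f g h H \<epsilon> \<eta> :: real
  assumes f: "0 \<le> f" and h: "0 \<le> h" "h \<le> H"
    and family: "\<And>\<eta>. \<eta> > 0 \<Longrightarrow> g \<le> (\<eta> * h + f / \<eta>) / 2"
    and \<epsilon>: "0 < \<epsilon>" "\<epsilon> \<le> 1" and \<eta>: "\<eta> > 0"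
  shows "g \<le> (H + 1) / \<epsilon> * f + \<eta> / 2 * H * indicator {0<..\<epsilon>} f + f / (2 * \<eta>)"
proof -
  have H: "H \<ge> 0" using h by simp
  have nonneg: "0 \<le> (H + 1) / \<epsilon> * f" "0 \<le> \<eta> / 2 * H * indicator {0<..\<epsilon>} f" "0 \<le> f / (2 * \<eta>)"
    using H \<epsilon> \<eta> f by auto
  consider "f = 0" | "0 < f" "f \<le> \<epsilon>" | "\<epsilon> < f"
    using f by linarith
  then show ?thesis
  proof cases
    case 1
    have "g \<le> 0"
    proof (rule ccontr)
      assume "\<not> g \<le> 0"
      then have "g / (H + 1) > 0" using H by simp
      from family[OF this] have "g \<le> g * (h / (2 * (H + 1)))"
        using 1 H by (simp add: field_simps)
      also have "\<dots> < g * 1"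
        using \<open>\<not> g \<le> 0\<close> h H by (intro mult_strict_left_mono) (auto simp: field_simps)
      finally show False by simp
    qed
    with nonneg show ?thesis by linarith
  next
    case 2
    have "g \<le> \<eta> / 2 * h + f / (2 * \<eta>)"
      using family[OF \<eta>] by (simp add: field_simps)
    also have "\<dots> \<le> \<eta> / 2 * H + f / (2 * \<eta>)"
      using h \<eta> by simp
    finally show ?thesis
      using 2 nonneg by simp
  next
    case 3
    define \<eta>' where "\<eta>' = \<epsilon> / (H + 1)"
    have \<eta>': "\<eta>' > 0" "1 \<le> 1 / \<eta>'"
      using \<epsilon> H by (auto simp: \<eta>'_def field_simps)
    have "\<eta>' * h \<le> \<eta>' * H"
      using h \<eta>' by (intro mult_left_mono) auto
    also have "\<dots> \<le> \<epsilon>"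
      using \<epsilon> H by (simp add: \<eta>'_def field_simps)
    finally have "\<eta>' * h \<le> \<epsilon>" .
    have "f \<le> f / \<eta>'"
      using mult_left_mono[OF \<eta>'(2) f] by simp
    have mean_le: "(a + b) / 2 \<le> b" if "a \<le> b" for a b :: real
      using that by simp
    have "g \<le> (\<eta>' * h + f / \<eta>') / 2"
      by (rule family[OF \<eta>'(1)])
    also have "\<dots> \<le> f / \<eta>'"
      using \<open>\<eta>' * h \<le> \<epsilon>\<close> \<open>f \<le> f / \<eta>'\<close> 3 by (intro mean_le) linarith
    also have "\<dots> = (H + 1) / \<epsilon> * f"
      using \<epsilon> H by (simp add: \<eta>'_def)
    finally show ?thesis
      using nonneg by linarith
  qed
qed

lemma integral_cross_term_bound:
  fixes f h q :: "'l \<Rightarrow> real" and g :: "'l \<Rightarrow> complex"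
  assumes "finite_measure \<mu>"
    and meas: "f \<in> borel_measurable \<mu>" "g \<in> borel_measurable \<mu>" "q \<in> borel_measurable \<mu>"
    and bnd: "\<And>l. l \<in> space \<mu> \<Longrightarrow> 0 \<le> f l \<and> f l \<le> F \<and> 0 \<le> h l \<and> h l \<le> H"
    and family: "\<And>l \<eta>. l \<in> space \<mu> \<Longrightarrow> \<eta> > 0 \<Longrightarrow> cmod (g l) \<le> (\<eta> * h l + f l / \<eta>) / 2"
    and q: "\<And>l. l \<in> space \<mu> \<Longrightarrow> 0 \<le> q l \<and> q l \<le> 1"
    and \<epsilon>: "0 < \<epsilon>" "\<epsilon> \<le> 1" and \<eta>: "\<eta> > 0"
  shows "cmod (LINT l|\<mu>. of_real (q l) * g l) \<le>
           (H + 1) / \<epsilon> * (LINT l|\<mu>. q l * f l)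
           + \<eta> / 2 * H * measure \<mu> {l \<in> space \<mu>. f l \<in> {0<..\<epsilon>}}
           + (LINT l|\<mu>. q l * f l) / (2 * \<eta>)"
proof -
  interpret finite_measure \<mu> by (rule assms(1))
  define E where "E = {l \<in> space \<mu>. f l \<in> {0<..\<epsilon>}}"
  define bound where "bound = (\<lambda>l. (H + 1) / \<epsilon> * (q l * f l) + \<eta> / 2 * H * indicator E l
    + (q l * f l) / (2 * \<eta>))"
  have E: "E \<in> sets \<mu>"
    unfolding E_def using meas(1) by measurable
  have g: "cmod (g l) \<le> (H + F) / 2" if "l \<in> space \<mu>" for l
    using family[OF that, of 1] bnd[OF that] by simp
  have int_qf: "integrable \<mu> (\<lambda>l. q l * f l)"
  proof (rule integrable_const_bound[OF AE_I2])
    show "norm (q l * f l) \<le> F" if "l \<in> space \<mu>" for l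
      using q[OF that] bnd[OF that] mult_mono[of "q l" 1 "f l" F] by (simp add: abs_mult)
  qed (use meas in measurable)
  have int_qg: "integrable \<mu> (\<lambda>l. of_real (q l) * g l)"
  proof (rule integrable_const_bound[OF AE_I2])
    show "norm (of_real (q l) * g l) \<le> (H + F) / 2" if "l \<in> space \<mu>" for l
      using q[OF that] g[OF that] mult_mono[of "q l" 1 "cmod (g l)" "(H + F) / 2"]
      by (simp add: norm_mult)
  qed (use meas in measurable)
  have int_E: "integrable \<mu> (indicator E :: 'l \<Rightarrow> real)"
    using E by (intro integrable_real_indicator) (auto simp: less_top[symmetric])
  then have int_bound: "integrable \<mu> bound"
    unfolding bound_def using int_qf by auto
  have "cmod (LINT l|\<mu>. of_real (q l) * g l) \<le> (LINT l|\<mu>. cmod (of_real (q l) * g l))"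
    by (rule integral_norm_bound)
  also have "\<dots> \<le> integral\<^sup>L \<mu> bound"
  proof (rule integral_mono[OF integrable_norm[OF int_qg] int_bound])
    fix l assume l: "l \<in> space \<mu>"
    have "cmod (g l) \<le> (H + 1) / \<epsilon> * f l + \<eta> / 2 * H * indicator {0<..\<epsilon>} (f l) + f l / (2 * \<eta>)"
      using bnd[OF l] family[OF l] \<epsilon> \<eta> by (intro am_gm_family_bound[where h = "h l" and H = H]) auto
    then have "q l * cmod (g l) \<le> q l * ((H + 1) / \<epsilon> * f l + \<eta> / 2 * H * indicator E l + f l / (2 * \<eta>))"
      using q[OF l] l by (intro mult_left_mono) (auto simp: E_def indicator_def)
    also have "\<dots> \<le> bound l"
      using q[OF l] \<eta> bnd[OF l] mult_left_le_one_le[of "\<eta> / 2 * H * indicator E l" "q l"]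
      by (auto simp: bound_def algebra_simps)
    finally show "cmod (of_real (q l) * g l) \<le> bound l"
      using q[OF l] by (simp add: norm_mult)
  qed
  also have "\<dots> = (H + 1) / \<epsilon> * (LINT l|\<mu>. q l * f l) + \<eta> / 2 * H * measure \<mu> E
      + (LINT l|\<mu>. q l * f l) / (2 * \<eta>)"
    using int_qf int_E E by (simp add: bound_def Int_absorb2[OF sets.sets_into_space[OF E]])
  finally show ?thesis
    unfolding E_def .
qed

text \<open>Hidden states with 0 < f \<le> \<epsilon> have small total measure, those with f > \<epsilon>
  contribute O(t^2 / \<epsilon>); the AM-GM parameter is taken proportional to t.\<close>

lemma cross_term_little_o:
  fixes f h :: "'l \<Rightarrow> real" and g :: "'l \<Rightarrow> complex"
  assumes "prob_space \<mu>"
    and meas: "f \<in> borel_measurable \<mu>" "g \<in> borel_measurable \<mu>"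
    and bnd: "\<And>l. l \<in> space \<mu> \<Longrightarrow> 0 \<le> f l \<and> f l \<le> F \<and> 0 \<le> h l \<and> h l \<le> H"
    and family: "\<And>l \<eta>. l \<in> space \<mu> \<Longrightarrow> \<eta> > 0 \<Longrightarrow> cmod (g l) \<le> (\<eta> * h l + f l / \<eta>) / 2"
    and C: "C \<ge> 0" and \<kappa>: "\<kappa> > 0"
  obtains M where "\<And>q t. q \<in> borel_measurable \<mu> \<Longrightarrow> \<forall>l\<in>space \<mu>. 0 \<le> q l \<and> q l \<le> 1 \<Longrightarrow> 0 < t \<Longrightarrow>
      (LINT l|\<mu>. q l * f l) \<le> C * t\<^sup>2 \<Longrightarrow> cmod (LINT l|\<mu>. of_real (q l) * g l) \<le> \<kappa> * t + M * t\<^sup>2"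
proof -
  interpret prob_space \<mu> by (rule assms(1))
  have H: "H \<ge> 0"
    using bnd not_empty by force
  define k where "k = C / \<kappa> + 1"
  have k: "k > 0" "C / (2 * k) \<le> \<kappa> / 2"
    using \<kappa> C by (auto simp: k_def field_simps add_pos_nonneg)
  have "\<kappa> / (k * (H + 1)) > 0"
    using \<kappa> k H by simp
  then obtain \<epsilon> where \<epsilon>: "0 < \<epsilon>" "\<epsilon> \<le> 1"
    and small: "measure \<mu> {l \<in> space \<mu>. f l \<in> {0<..\<epsilon>}} < \<kappa> / (k * (H + 1))"
    by (rule measure_small_level_set[OF finite_measure_axioms meas(1)])
  define s where "s = (H + 1) / \<epsilon>"
  show ?thesis
  proof (rule that[of "s * C"])
    fix q t
    assume q: "q \<in> borel_measurable \<mu>" "\<forall>l\<in>space \<mu>. 0 \<le> q l \<and> q l \<le> 1" and t: "0 < t"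
      and Y: "(LINT l|\<mu>. q l * f l) \<le> C * t\<^sup>2"
    define \<eta> where "\<eta> = k * t"
    have \<eta>: "\<eta> > 0"
      using k t by (simp add: \<eta>_def)
    have "cmod (LINT l|\<mu>. of_real (q l) * g l) \<le>
        s * (LINT l|\<mu>. q l * f l)
        + \<eta> / 2 * H * measure \<mu> {l \<in> space \<mu>. f l \<in> {0<..\<epsilon>}}
        + (LINT l|\<mu>. q l * f l) / (2 * \<eta>)"
      unfolding s_def by (rule integral_cross_term_bound[OF finite_measure_axioms meas q(1) bnd family])
        (use q \<epsilon> \<eta> in auto)
    also have "\<dots> \<le> s * (C * t\<^sup>2) + \<kappa> / 2 * t + \<kappa> / 2 * t"
    proof -
      have "s * (LINT l|\<mu>. q l * f l) \<le> s * (C * t\<^sup>2)"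
        using Y H \<epsilon> by (intro mult_left_mono) (auto simp: s_def)
      moreover have "\<eta> / 2 * H * measure \<mu> {l \<in> space \<mu>. f l \<in> {0<..\<epsilon>}} \<le> \<kappa> / 2 * t"
      proof -
        have "\<eta> / 2 * H * measure \<mu> {l \<in> space \<mu>. f l \<in> {0<..\<epsilon>}} \<le> \<eta> / 2 * H * (\<kappa> / (k * (H + 1)))"
          using small \<eta> H by (intro mult_left_mono) auto
        also have "\<dots> = \<kappa> / 2 * t * (H / (H + 1))"
          using k by (simp add: \<eta>_def)
        also have "\<dots> \<le> \<kappa> / 2 * t"
          using \<kappa> t H by (intro mult_left_le) auto
        finally show ?thesis .
      qed
      moreover have "(LINT l|\<mu>. q l * f l) / (2 * \<eta>) \<le> \<kappa> / 2 * t"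
      proof -
        have "(LINT l|\<mu>. q l * f l) / (2 * \<eta>) \<le> C * t\<^sup>2 / (2 * \<eta>)"
          using Y \<eta> by (intro divide_right_mono) auto
        also have "\<dots> = C / (2 * k) * t"
          using k t by (simp add: \<eta>_def power2_eq_square field_simps)
        also have "\<dots> \<le> \<kappa> / 2 * t"
          using k t by (intro mult_right_mono) auto
        finally show ?thesis .
      qed
      ultimately show ?thesis by linarith
    qed
    finally show "cmod (LINT l|\<mu>. of_real (q l) * g l) \<le> \<kappa> * t + s * C * t\<^sup>2"
      by (simp add: algebra_simps)
  qed
qed

lemma no_linear_response:
  fixes f h :: "'l \<Rightarrow> real" and g :: "'l \<Rightarrow> complex"
  assumes "prob_space \<mu>"
    and meas: "f \<in> borel_measurable \<mu>" "g \<in> borel_measurable \<mu>"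
    and bnd: "\<And>l. l \<in> space \<mu> \<Longrightarrow> 0 \<le> f l \<and> f l \<le> F \<and> 0 \<le> h l \<and> h l \<le> H"
    and family: "\<And>l \<eta>. l \<in> space \<mu> \<Longrightarrow> \<eta> > 0 \<Longrightarrow> cmod (g l) \<le> (\<eta> * h l + f l / \<eta>) / 2"
    and response: "\<And>t. 0 < t \<Longrightarrow> t \<le> 1 \<Longrightarrow> \<exists>q\<in>borel_measurable \<mu>.
          (\<forall>l\<in>space \<mu>. 0 \<le> q l \<and> q l \<le> 1) \<and>
          \<beta> * t - K * t\<^sup>2 \<le> cmod (LINT l|\<mu>. of_real (q l) * g l) \<and>
          (LINT l|\<mu>. q l * f l) \<le> C * t\<^sup>2"
    and \<beta>: "\<beta> > 0" and C: "C \<ge> 0"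
  shows False
proof -
  obtain M where M: "\<And>q t. q \<in> borel_measurable \<mu> \<Longrightarrow> \<forall>l\<in>space \<mu>. 0 \<le> q l \<and> q l \<le> 1 \<Longrightarrow> 0 < t \<Longrightarrow>
      (LINT l|\<mu>. q l * f l) \<le> C * t\<^sup>2 \<Longrightarrow> cmod (LINT l|\<mu>. of_real (q l) * g l) \<le> \<beta> / 2 * t + M * t\<^sup>2"
    using cross_term_little_o[OF assms(1) meas bnd family C, of "\<beta> / 2"] \<beta> by auto
  define L where "L = \<bar>M\<bar> + \<bar>K\<bar>"
  define t where "t = min 1 (\<beta> / (2 * L + 1))"
  have t: "0 < t" "t \<le> 1" and "L * t < \<beta> / 2"
  proof -
    show "0 < t" "t \<le> 1"
      using \<beta> by (auto simp: t_def L_def)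
    have "L * t \<le> L * (\<beta> / (2 * L + 1))"
      by (intro mult_left_mono) (auto simp: t_def L_def)
    also have "\<dots> < \<beta> / 2"
      using \<beta> by (simp add: L_def field_simps)
    finally show "L * t < \<beta> / 2" .
  qed
  moreover have "(M + K) * t \<le> L * t"
    using t by (intro mult_right_mono) (auto simp: L_def)
  moreover obtain q where "q \<in> borel_measurable \<mu>" "\<forall>l\<in>space \<mu>. 0 \<le> q l \<and> q l \<le> 1"
    and "\<beta> * t - K * t\<^sup>2 \<le> cmod (LINT l|\<mu>. of_real (q l) * g l)" "(LINT l|\<mu>. q l * f l) \<le> C * t\<^sup>2"
    using response[OF t] by blast
  with M t have "\<beta> * t - K * t\<^sup>2 \<le> \<beta> / 2 * t + M * t\<^sup>2"
    by fastforce
  then have "\<beta> / 2 * t \<le> (M + K) * t * t"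
    by (simp add: algebra_simps power2_eq_square)
  then have "\<beta> / 2 \<le> (M + K) * t"
    using t by (simp add: mult_le_cancel_right)
  ultimately show False
    by linarith
qed

section \<open>Steering along a kernel vector\<close>

lemma linear_coeff_eq_0_if_nonneg:
  fixes \<gamma> d :: complex
  assumes nonneg: "\<And>t::real. \<exists>r\<ge>0. of_real t * \<gamma> + of_real (t\<^sup>2) * d = of_real r"
  shows "\<gamma> = 0"
proof -
  have re: "0 \<le> t * Re \<gamma> + t\<^sup>2 * Re d" and im: "t * Im \<gamma> + t\<^sup>2 * Im d = 0" for t :: real
    using nonneg[of t] by (auto simp: complex_eq_iff)
  have "Im \<gamma> = 0"
    using im[of 1] im[of "-1"] by simp
  moreover have "Re \<gamma> = 0"
  proof (rule ccontr)
    assume "Re \<gamma> \<noteq> 0"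
    define D where "D = \<bar>Re d\<bar> + 1"
    have D: "D > 0" and "\<bar>Re d\<bar> = D - 1"
      by (simp_all add: D_def add_nonneg_pos)
    define t where "t = - Re \<gamma> / D"
    have "t * Re \<gamma> + t\<^sup>2 * Re d \<le> t * Re \<gamma> + t\<^sup>2 * \<bar>Re d\<bar>"
      by (intro add_left_mono mult_left_mono) auto
    also have "\<dots> = - (Re \<gamma>)\<^sup>2 / D\<^sup>2"
      using D unfolding \<open>\<bar>Re d\<bar> = D - 1\<close> t_def by (simp add: field_simps power2_eq_square)
    also have "\<dots> < 0"
      using \<open>Re \<gamma> \<noteq> 0\<close> D by simp
    finally show False
      using re[of t] by simp
  qed
  ultimately show ?thesis
    by (simp add: complex_eq_iff)
qed

lemma norm_lower_bound_quadratic: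
  fixes t :: real and \<beta> b X :: complex
  assumes t: "0 < t" "t \<le> 1"
    and X: "of_real (1 + t\<^sup>2) * X = of_real t * \<beta> + of_real (t\<^sup>2) * b"
  shows "cmod \<beta> * t - (cmod \<beta> + cmod b) * t\<^sup>2 \<le> cmod X"
proof -
  have "cmod \<beta> * t - cmod b * t\<^sup>2 \<le> cmod (of_real t * \<beta> + of_real (t\<^sup>2) * b)"
    using norm_diff_ineq[of "of_real t * \<beta>" "of_real (t\<^sup>2) * b"] t
    by (simp add: norm_mult norm_power mult.commute)
  also have "\<dots> = cmod X + t\<^sup>2 * cmod X"
    unfolding X[symmetric] norm_mult norm_of_real by (simp add: algebra_simps abs_of_nonneg)
  finally have main: "cmod \<beta> * t - cmod b * t\<^sup>2 \<le> cmod X + t\<^sup>2 * cmod X" .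
  have split: "cmod \<beta> * t - (cmod \<beta> + cmod b) * t\<^sup>2 = cmod \<beta> * t - cmod b * t\<^sup>2 - t\<^sup>2 * cmod \<beta>"
    by (simp add: algebra_simps)
  show ?thesis
  proof (cases "cmod \<beta> * t \<le> cmod X")
    case True
    moreover have "0 \<le> cmod b * t\<^sup>2" "0 \<le> t\<^sup>2 * cmod \<beta>"
      by simp_all
    ultimately show ?thesis
      unfolding split by linarith
  next
    case False
    then have "t\<^sup>2 * cmod X \<le> t\<^sup>2 * (cmod \<beta> * t)"
      by (intro mult_left_mono) auto
    also have "\<dots> \<le> t\<^sup>2 * cmod \<beta>"
      using t by (intro mult_left_mono mult_left_le) auto
    finally show ?thesis
      unfolding split using main by linarith
  qed
qed

lemma exists_unimodular_sum_nonzero: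
  fixes x y :: complex
  assumes "x \<noteq> 0"
  obtains c where "cmod c = 1" "c * x + cnj c * y \<noteq> 0"
proof (cases "x + y = 0")
  case True
  then have "\<i> * x + cnj \<i> * y = 2 * \<i> * x"
    by (simp add: algebra_simps eq_neg_iff_add_eq_0[symmetric])
  with assms show ?thesis
    by (intro that[of \<i>]) auto
next
  case False
  then show ?thesis
    by (intro that[of 1]) auto
qed

lemma LHS_model_kernel_response:
  assumes orthonormal: "cinner \<alpha>0 \<alpha>0 = 1" "cinner \<alpha>1 \<alpha>1 = 1" "cinner \<alpha>0 \<alpha>1 = 0"
    and model: "LHS_model \<mu> \<tau> p \<rho>"
    and Av: "mat_vec (partial_elem \<rho> \<alpha>0 \<alpha>0) v = (\<lambda>_. 0)" and c: "cmod c = 1"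
  obtains q where "q \<in> borel_measurable \<mu>" "\<forall>l\<in>space \<mu>. 0 \<le> q l \<and> q l \<le> 1"
    "\<And>a. of_real t * (c * braket a (partial_elem \<rho> \<alpha>0 \<alpha>1) v + cnj c * braket a (partial_elem \<rho> \<alpha>1 \<alpha>0) v)
        + of_real (t\<^sup>2) * braket a (partial_elem \<rho> \<alpha>1 \<alpha>1) v
        = of_real (1 + t\<^sup>2) * (LINT l|\<mu>. of_real (q l) * braket a (\<tau> l) v)"
proof -
  have "cnj c * c = 1"
    using c complex_norm_square[of c] by (simp add: mult.commute)
  then have z: "cnj (of_real t * c) * (of_real t * c) = of_real (t\<^sup>2)"
    by (simp add: power2_eq_square mult_ac)
  obtain q where "q \<in> borel_measurable \<mu>" "\<forall>l\<in>space \<mu>. 0 \<le> q l \<and> q l \<le> 1"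
    and resp: "\<And>a b. braket a (partial_elem \<rho> \<alpha>0 \<alpha>0) b + (of_real t * c) * braket a (partial_elem \<rho> \<alpha>0 \<alpha>1) b
      + cnj (of_real t * c) * braket a (partial_elem \<rho> \<alpha>1 \<alpha>0) b
      + cnj (of_real t * c) * (of_real t * c) * braket a (partial_elem \<rho> \<alpha>1 \<alpha>1) b
      = (1 + cnj (of_real t * c) * (of_real t * c)) * (LINT l|\<mu>. of_real (q l) * braket a (\<tau> l) b)"
    using LHS_model_superpos_response[OF orthonormal model, where z = "of_real t * c"] by blast
  moreover note resp[of _ v, unfolded Av z]
  ultimately show ?thesis
    using that by (simp add: algebra_simps)
qed

lemma integral_braket_self_psd:
  assumes "\<And>l. l \<in> space \<mu> \<Longrightarrow> psd (\<tau> l)"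
  shows "(LINT l|\<mu>. of_real (q l) * braket v (\<tau> l) v) = of_real (LINT l|\<mu>. q l * Re (braket v (\<tau> l) v))"
proof -
  have "(LINT l|\<mu>. of_real (q l) * braket v (\<tau> l) v) = (LINT l|\<mu>. of_real (q l * Re (braket v (\<tau> l) v)))"
    using psd_braket_real[OF assms] by (intro Bochner_Integration.integral_cong) auto
  also have "\<dots> = of_real (LINT l|\<mu>. q l * Re (braket v (\<tau> l) v))"
    by (rule integral_complex_of_real)
  finally show ?thesis .
qed

lemma LHS_model_kernel_linear_term:
  assumes orthonormal: "cinner \<alpha>0 \<alpha>0 = 1" "cinner \<alpha>1 \<alpha>1 = 1" "cinner \<alpha>0 \<alpha>1 = 0"
    and model: "LHS_model \<mu> \<tau> p \<rho>"
    and Av: "mat_vec (partial_elem \<rho> \<alpha>0 \<alpha>0) v = (\<lambda>_. 0)" and c: "cmod c = 1"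
  shows "c * braket v (partial_elem \<rho> \<alpha>0 \<alpha>1) v + cnj c * braket v (partial_elem \<rho> \<alpha>1 \<alpha>0) v = 0"
proof (rule linear_coeff_eq_0_if_nonneg)
  fix t :: real
  have psd: "\<And>l. l \<in> space \<mu> \<Longrightarrow> psd (\<tau> l)"
    using model by (auto simp: LHS_model_def density_matrix_def)
  obtain q where "q \<in> borel_measurable \<mu>" and q: "\<forall>l\<in>space \<mu>. 0 \<le> q l \<and> q l \<le> 1"
    and resp: "\<And>a. of_real t * (c * braket a (partial_elem \<rho> \<alpha>0 \<alpha>1) v + cnj c * braket a (partial_elem \<rho> \<alpha>1 \<alpha>0) v)
        + of_real (t\<^sup>2) * braket a (partial_elem \<rho> \<alpha>1 \<alpha>1) v
        = of_real (1 + t\<^sup>2) * (LINT l|\<mu>. of_real (q l) * braket a (\<tau> l) v)"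
    using LHS_model_kernel_response[OF orthonormal model Av c, where t = t] by blast
  have "0 \<le> (LINT l|\<mu>. q l * Re (braket v (\<tau> l) v))"
    using q psd_Re_nonneg[OF psd] by (intro integral_nonneg_AE AE_I2) auto
  with resp[of v] show "\<exists>r\<ge>0. of_real t * (c * braket v (partial_elem \<rho> \<alpha>0 \<alpha>1) v
      + cnj c * braket v (partial_elem \<rho> \<alpha>1 \<alpha>0) v) + of_real (t\<^sup>2) * braket v (partial_elem \<rho> \<alpha>1 \<alpha>1) v
      = of_real r"
    by (intro exI[of _ "(1 + t\<^sup>2) * (LINT l|\<mu>. q l * Re (braket v (\<tau> l) v))"])
      (simp add: integral_braket_self_psd[OF psd])
qed

lemma no_LHS_model_of_kernel_vector:
  fixes \<rho> :: "('x::finite \<times> 'y::finite) cmat" and \<mu> :: "'l measure"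
  assumes orthonormal: "cinner \<alpha>0 \<alpha>0 = 1" "cinner \<alpha>1 \<alpha>1 = 1" "cinner \<alpha>0 \<alpha>1 = 0"
    and Av: "mat_vec (partial_elem \<rho> \<alpha>0 \<alpha>0) v = (\<lambda>_. 0)"
    and Bv: "mat_vec (partial_elem \<rho> \<alpha>0 \<alpha>1) v \<noteq> (\<lambda>_. 0)"
  shows "\<not> LHS_model \<mu> \<tau> p \<rho>"
proof
  assume model: "LHS_model \<mu> \<tau> p \<rho>"
  then have prob: "prob_space \<mu>" and dens: "\<And>l. l \<in> space \<mu> \<Longrightarrow> density_matrix (\<tau> l)"
    and \<tau>_meas: "\<And>y y'. (\<lambda>l. \<tau> l y y') \<in> borel_measurable \<mu>"
    by (auto simp: LHS_model_def)
  have psd: "\<And>l. l \<in> space \<mu> \<Longrightarrow> psd (\<tau> l)"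
    using dens by (auto simp: density_matrix_def)
  define w where "w = mat_vec (partial_elem \<rho> \<alpha>0 \<alpha>1) v"
  define B where "B a = braket a (partial_elem \<rho> \<alpha>0 \<alpha>1) v" for a
  define B' where "B' a = braket a (partial_elem \<rho> \<alpha>1 \<alpha>0) v" for a
  define D where "D a = braket a (partial_elem \<rho> \<alpha>1 \<alpha>1) v" for a
  define f where "f l = Re (braket v (\<tau> l) v)" for l
  have "B w = cinner w w"
    by (simp add: B_def w_def)
  then have "B w \<noteq> 0"
    using Bv cinner_self_eq_0_iff[of w] by (simp add: w_def)
  then obtain c where c: "cmod c = 1" and \<beta>: "c * B w + cnj c * B' w \<noteq> 0"
    by (rule exists_unimodular_sum_nonzero)
  have \<gamma>: "c * B v + cnj c * B' v = 0"
    unfolding B_def B'_def by (rule LHS_model_kernel_linear_term[OF orthonormal model Av c])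
  show False
  proof (rule no_linear_response[OF prob])
    show "f \<in> borel_measurable \<mu>" "(\<lambda>l. braket w (\<tau> l) v) \<in> borel_measurable \<mu>"
      unfolding f_def using measurable_braket[OF \<tau>_meas] by measurable
    show "0 \<le> f l \<and> f l \<le> (\<Sum>i\<in>UNIV. cmod (v i)) * (\<Sum>i\<in>UNIV. cmod (v i)) \<and>
        0 \<le> Re (braket w (\<tau> l) w) \<and> Re (braket w (\<tau> l) w) \<le> (\<Sum>i\<in>UNIV. cmod (w i)) * (\<Sum>i\<in>UNIV. cmod (w i))"
      if "l \<in> space \<mu>" for l
      using density_matrix_braket_self_bound[OF dens[OF that]] unfolding f_def by blast
    show "cmod (braket w (\<tau> l) v) \<le> (\<eta> * Re (braket w (\<tau> l) w) + f l / \<eta>) / 2"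
      if "l \<in> space \<mu>" "\<eta> > 0" for l \<eta>
      unfolding f_def by (rule psd_cauchy_schwarz[OF psd[OF that(1)] that(2)])
    show "\<exists>q\<in>borel_measurable \<mu>. (\<forall>l\<in>space \<mu>. 0 \<le> q l \<and> q l \<le> 1) \<and>
        cmod (c * B w + cnj c * B' w) * t - (cmod (c * B w + cnj c * B' w) + cmod (D w)) * t\<^sup>2
          \<le> cmod (LINT l|\<mu>. of_real (q l) * braket w (\<tau> l) v) \<and>
        (LINT l|\<mu>. q l * f l) \<le> cmod (D v) * t\<^sup>2"
      if t: "0 < t" "t \<le> 1" for t
    proof -
      obtain q where q: "q \<in> borel_measurable \<mu>" "\<forall>l\<in>space \<mu>. 0 \<le> q l \<and> q l \<le> 1"
        and resp: "\<And>a. of_real t * (c * B a + cnj c * B' a) + of_real (t\<^sup>2) * D a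
          = of_real (1 + t\<^sup>2) * (LINT l|\<mu>. of_real (q l) * braket a (\<tau> l) v)"
        using LHS_model_kernel_response[OF orthonormal model Av c, where t = t, folded B_def B'_def D_def]
        by blast
      have Y: "(1 + t\<^sup>2) * (LINT l|\<mu>. q l * f l) = t\<^sup>2 * Re (D v)"
        using arg_cong[OF resp[of v], of Re] \<gamma> by (simp add: integral_braket_self_psd[OF psd] f_def)
      have "0 \<le> (LINT l|\<mu>. q l * f l)"
        using q psd_Re_nonneg[OF psd] by (intro integral_nonneg_AE AE_I2) (auto simp: f_def)
      then have "(LINT l|\<mu>. q l * f l) \<le> (1 + t\<^sup>2) * (LINT l|\<mu>. q l * f l)"
        by (simp add: distrib_right)
      also have "\<dots> = t\<^sup>2 * Re (D v)"
        by (rule Y)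
      also have "\<dots> \<le> t\<^sup>2 * cmod (D v)"
        by (intro mult_left_mono complex_Re_le_cmod) simp
      finally have "(LINT l|\<mu>. q l * f l) \<le> cmod (D v) * t\<^sup>2"
        by (simp add: mult.commute)
      with q norm_lower_bound_quadratic[OF t resp[of w, symmetric]] show ?thesis
        by (auto simp: algebra_simps)
    qed
  qed (use \<beta> in auto)
qed

theorem proposition1:
  fixes \<rho> :: "('x::finite \<times> 'y::finite) cmat"
    and \<alpha>0 \<alpha>1 :: "'x \<Rightarrow> complex"
  assumes dimX: "CARD('x) \<ge> 2"
    and state: "density_matrix \<rho>"
    and orthonormal: "cinner \<alpha>0 \<alpha>0 = 1" "cinner \<alpha>1 \<alpha>1 = 1" "cinner \<alpha>0 \<alpha>1 = 0"
    and A_nonzero: "partial_elem \<rho> \<alpha>0 \<alpha>0 \<noteq> zero_mat"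
    and ker_nontrivial: "mat_kernel (partial_elem \<rho> \<alpha>0 \<alpha>0) \<noteq> {\<lambda>_. 0}"
    and PBP: "mat_mult (mat_mult (orth_proj (mat_range (partial_elem \<rho> \<alpha>0 \<alpha>0)))
                                 (partial_elem \<rho> \<alpha>0 \<alpha>1))
                       (orth_proj (mat_kernel (partial_elem \<rho> \<alpha>0 \<alpha>0))) \<noteq> zero_mat"
  shows "NPT \<rho> \<and> (\<forall>(\<mu>::'l measure) \<tau> p. \<not> LHS_model \<mu> \<tau> p \<rho>)"
proof -
  \<comment> \<open>dimX, A_nonzero and ker_nontrivial follow from orthonormal and PBP.\<close>
  obtain v where Av: "mat_vec (partial_elem \<rho> \<alpha>0 \<alpha>0) v = (\<lambda>_. 0)"
    and Bv: "mat_vec (partial_elem \<rho> \<alpha>0 \<alpha>1) v \<noteq> (\<lambda>_. 0)"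
    using kernel_vector_not_annihilated[OF PBP] by blast
  have "psd \<rho>"
    using state by (simp add: density_matrix_def)
  then have "NPT \<rho>"
    using Av Bv by (rule NPT_of_kernel_vector)
  moreover have "\<not> LHS_model \<mu> \<tau> p \<rho>" for \<mu> :: "'l measure" and \<tau> p
    by (rule no_LHS_model_of_kernel_vector[OF orthonormal Av Bv])
  ultimately show ?thesis
    by blast
qed

end
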